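(* $C_3(22) = 9$.
   Context: For positive integers $m, r$, $C_m(r)$ is the minimum odd positive integer $n$ such that there exist vectors $v_1, \ldots, v_n \in \mathbb{Z}^m$ (not necessarily distinct) with $|v_i| = \sqrt{r}$ (Euclidean norm) for every $i$ and $v_1 + \cdots + v_n = \mathbf{0}$; if no such odd $n$ exists, $C_m(r) = 0$. *)

theory Defs
  imports Complex_Main
begin

definition zero_sum_family :: "nat \<Rightarrow> nat \<Rightarrow> nat \<Rightarrow> bool" where
  "zero_sum_family m r n \<longleftrightarrow>
     (\<exists>vs :: int list list.
        length vs = n \<and>
        (\<forall>v \<in> set vs. length v = m \<and>
            sqrt (real_of_int (\<Sum>x\<leftarrow>v. x ^ 2)) = sqrt (real r)) \<and>
        (\<forall>i < m. (\<Sum>v\<leftarrow>vs. v ! i) = 0))"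

definition C :: "nat \<Rightarrow> nat \<Rightarrow> nat" where
  "C m r = (if \<exists>n. n > 0 \<and> odd n \<and> zero_sum_family m r n
            then (LEAST n. n > 0 \<and> odd n \<and> zero_sum_family m r n)
            else 0)"

end

theory Submission
  imports Defs
begin

text \<open>The only way to write 22 as a sum of three squares is 9 + 9 + 4, so every vector of
  the family has entries \<open>\<plusminus>3, \<plusminus>3, \<plusminus>2\<close> in some order, exactly one of them even.
  In a coordinate summing to zero the number of odd entries is even, so for odd \<open>n\<close> the
  number of entries \<open>\<plusminus>2\<close> is odd; it cannot be 1, because the entries \<open>\<plusminus>3\<close> sum to a
  multiple of 3 and a single \<open>\<plusminus>2\<close> does not. So each of the three coordinates carries at
  least three even entries, and since every vector contributes exactly one, \<open>n \<ge> 9\<close>.\<close>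

lemma sum_three_squares_eq_22:
  fixes a b c :: int
  assumes sum: "a^2 + b^2 + c^2 = 22"
  shows "set [a,b,c] \<subseteq> {-3,-2,2,3} \<and> length (filter even [a,b,c]) = 1"
proof -
  have square_values: "x^2 \<in> {0,1,4,9,16}" if "x^2 \<le> 22" for x :: int
  proof -
    have "\<bar>x\<bar> < 5" using that abs_le_square_iff[of 5 x] by simp
    then have "x \<in> {-4,-3,-2,-1,0,1,2,3,4}" by auto
    then show ?thesis by (elim insertE emptyE; simp)
  qed
  have "a^2 \<in> {0,1,4,9,16}" "b^2 \<in> {0,1,4,9,16}" "c^2 \<in> {0,1,4,9,16}"
    using sum zero_le_power2[of a] zero_le_power2[of b] zero_le_power2[of c]
    by (intro square_values; linarith)+
  then have "a^2 = 4 \<and> b^2 = 9 \<and> c^2 = 9 \<or> a^2 = 9 \<and> b^2 = 4 \<and> c^2 = 9 \<or> a^2 = 9 \<and> b^2 = 9 \<and> c^2 = 4"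
    using sum by (elim insertE emptyE; simp)
  moreover have "x^2 = 4 \<longleftrightarrow> x = -2 \<or> x = 2" "x^2 = 9 \<longleftrightarrow> x = -3 \<or> x = 3" for x :: int
    using power2_eq_iff[of x 2] power2_eq_iff[of x 3] by auto
  ultimately show ?thesis by auto
qed

lemma even_sum_list_iff:
  fixes xs :: "'a :: semiring_parity list"
  shows "even (sum_list xs) \<longleftrightarrow> even (length (filter odd xs))"
  by (induction xs) auto

lemma sum_list_filter_add_filter_not:
  fixes xs :: "'a :: comm_monoid_add list"
  shows "sum_list (filter P xs) + sum_list (filter (\<lambda>x. \<not> P x) xs) = sum_list xs"
  by (induction xs) (simp_all add: ac_simps)

lemma dvd_sum_list:
  fixes xs :: "'a :: comm_semiring_1 list"
  assumes "\<And>x. x \<in> set xs \<Longrightarrow> d dvd x"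
  shows "d dvd sum_list xs"
  using assms by (induction xs) auto

lemma three_le_count_even_if_sum_list_eq_0:
  fixes xs :: "int list"
  assumes entries: "set xs \<subseteq> {-3,-2,2,3}" and sum: "sum_list xs = 0" and len: "odd (length xs)"
  shows "3 \<le> length (filter even xs)"
proof -
  have "even (length (filter odd xs))" using even_sum_list_iff[of xs] sum by simp
  moreover have "length (filter even xs) + length (filter odd xs) = length xs"
    by (rule sum_length_filter_compl)
  ultimately have odd_evens: "odd (length (filter even xs))" using len by (metis even_add)
  have "3 dvd sum_list (filter odd xs)" using entries by (intro dvd_sum_list) auto
  moreover have "sum_list (filter even xs) = - sum_list (filter odd xs)"
    using sum_list_filter_add_filter_not[of even xs] sum by simp
  ultimately have three_dvd_evens: "3 dvd sum_list (filter even xs)" by simp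
  show ?thesis
  proof (rule ccontr)
    assume "\<not> ?thesis"
    moreover have "n = 1" if "odd n" and "\<not> 3 \<le> n" for n :: nat
      using that by presburger
    ultimately have "length (filter even xs) = 1" using odd_evens by blast
    then obtain y where y: "filter even xs = [y]" by (auto simp: length_Suc_conv)
    then have "y \<in> set (filter even xs)" by simp
    with entries have "y \<in> {-2, 2}" by auto
    moreover have "3 dvd y" using three_dvd_evens y by simp
    ultimately show False by auto
  qed
qed

lemma sum_column_counts_eq_sum_row_counts:
  assumes "\<forall>v \<in> set vs. length v = m"
  shows "(\<Sum>i<m. length (filter P (map (\<lambda>v. v ! i) vs))) = (\<Sum>v\<leftarrow>vs. length (filter P v))"
  using assms
proof (induction vs)
  case Nil
  then show ?case by simp
next
  case (Cons v vs)
  have "length (filter P v) = (\<Sum>i<m. if P (v ! i) then 1 else 0)"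
    using Cons.prems by (simp add: length_filter_conv_card lessThan_def sum.inter_filter[symmetric])
  moreover have "length (filter P (map (\<lambda>v. v ! i) (v # vs)))
      = (if P (v ! i) then 1 else 0) + length (filter P (map (\<lambda>v. v ! i) vs))" for i
    by simp
  ultimately show ?case using Cons by (simp only: sum.distrib sum_list.Cons list.map) simp
qed

lemma C_eqI:
  assumes "odd n" and "zero_sum_family m r n"
    and "\<And>k. odd k \<Longrightarrow> zero_sum_family m r k \<Longrightarrow> n \<le> k"
  shows "C m r = n"
proof -
  have "0 < n" using \<open>odd n\<close> by (rule odd_pos)
  then have "(LEAST k. 0 < k \<and> odd k \<and> zero_sum_family m r k) = n"
    using assms by (intro Least_equality) auto
  with \<open>0 < n\<close> assms(1,2) show ?thesis unfolding C_def by auto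
qed

lemma zero_sum_family_3_22_9: "zero_sum_family 3 22 9"
  unfolding zero_sum_family_def
proof (intro exI conjI)
  let ?vs = "[[-3,-3,-2], [-3,-3,-2], [-3,-3,-2], [-3,2,-3], [2,-3,-3],
              [2,3,3], [2,3,3], [3,2,3], [3,2,3]] :: int list list"
  show "length ?vs = 9" by simp
  show "\<forall>v\<in>set ?vs. length v = 3 \<and> sqrt (real_of_int (\<Sum>x\<leftarrow>v. x ^ 2)) = sqrt (real 22)"
    by simp
  show "\<forall>i<3. (\<Sum>v\<leftarrow>?vs. v ! i) = 0"
    by (auto simp: less_Suc_eq numeral_3_eq_3)
qed

lemma zero_sum_family_3_22_ge_9:
  assumes "zero_sum_family 3 22 n" and "odd n"
  shows "9 \<le> n"
proof -
  obtain vs :: "int list list" where len: "length vs = n"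
    and rows: "\<forall>v \<in> set vs. length v = 3 \<and> sqrt (real_of_int (\<Sum>x\<leftarrow>v. x ^ 2)) = sqrt (real 22)"
    and columns: "\<forall>i < 3. (\<Sum>v\<leftarrow>vs. v ! i) = 0"
    using assms(1) unfolding zero_sum_family_def by blast
  have row_shape: "set v \<subseteq> {-3,-2,2,3} \<and> length (filter even v) = 1" if "v \<in> set vs" for v
  proof -
    have "length v = 3" and "(\<Sum>x\<leftarrow>v. x ^ 2) = 22" using rows that by auto
    moreover from \<open>length v = 3\<close> obtain a b c where v: "v = [a, b, c]"
      by (auto simp: numeral_3_eq_3 length_Suc_conv)
    ultimately show ?thesis using sum_three_squares_eq_22[of a b c] by simp
  qed
  have column_evens: "3 \<le> length (filter even (map (\<lambda>v. v ! i) vs))" if i: "i < 3" for i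
  proof (rule three_le_count_even_if_sum_list_eq_0)
    have "v ! i \<in> {-3,-2,2,3}" if "v \<in> set vs" for v
    proof -
      have "v ! i \<in> set v" using rows that i by (intro nth_mem) auto
      then show ?thesis using row_shape[OF that] by blast
    qed
    then show "set (map (\<lambda>v. v ! i) vs) \<subseteq> {-3,-2,2,3}" by auto
    show "sum_list (map (\<lambda>v. v ! i) vs) = 0" using columns that by simp
    show "odd (length (map (\<lambda>v. v ! i) vs))" using len assms(2) by simp
  qed
  have "(9::nat) = (\<Sum>i<3::nat. 3)" by simp
  also have "\<dots> \<le> (\<Sum>i<3. length (filter even (map (\<lambda>v. v ! i) vs)))"
    using column_evens by (intro sum_mono) simp
  also have "\<dots> = (\<Sum>v\<leftarrow>vs. length (filter even v))"
    using rows by (intro sum_column_counts_eq_sum_row_counts) auto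
  also have "\<dots> = (\<Sum>v\<leftarrow>vs. 1)"
    using row_shape by (intro arg_cong[where f = sum_list] map_cong) auto
  also have "\<dots> = n" using len by (simp add: sum_list_triv)
  finally show ?thesis .
qed

theorem theorem4:
  shows "C 3 22 = 9"
  using zero_sum_family_3_22_9 zero_sum_family_3_22_ge_9 by (intro C_eqI) auto

end
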